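(* Let $\Psi:(0,\infty)^2\to[0,\infty)$ be measurable and symmetric, and assume there are $\beta>0$, $k>0$ with $\Psi(\zeta,\eta)\le k(\zeta\eta)^{-\beta}$ on $(0,1)^2$, $\Psi(\zeta,\eta)\le k\eta\zeta^{-\beta}$ on $(0,1)\times(1,\infty)$, and $\Psi(\zeta,\eta)\le k(\zeta+\eta)$ on $(1,\infty)^2$. Let $T\in(0,\infty]$, let $g^{in}\in L^1_{-2\beta,1}(0,\infty)$ be non-negative, and let $g$ be a weak solution on $[0,T)$ of the Smoluchowski coagulation equation with kernel $\Psi$ and initial condition $g^{in}$. Then $\int_0^\infty\zeta g(\zeta,t)\,d\zeta=\int_0^\infty\zeta g^{in}(\zeta)\,d\zeta$ for all $t\in(0,T)$.
   Context: $L^1_{-2\beta,1}(0,\infty):=L^1((0,\infty);(\zeta^{-2\beta}+\zeta)d\zeta)$. A weak solution on $[0,T)$ is a non-negative function $g\in\mathcal{C}([0,T);L^1(0,\infty))\cap L^\infty(0,T;L^1_{-2\beta,1}(0,\infty))$ such that for every $t\in(0,T)$ and every $\omega\in L^\infty(0,\infty)$, $\int_0^\infty[g(\zeta,t)-g^{in}(\zeta)]\omega(\zeta)d\zeta=\frac12\int_0^t\int_0^\infty\int_0^\infty\tilde\omega(\zeta,\eta)\Psi(\zeta,\eta)g(\zeta,s)g(\eta,s)d\eta d\zeta ds$, where $\tilde\omega(\zeta,\eta):=\omega(\zeta+\eta)-\omega(\zeta)-\omega(\eta)$. *)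

theory Defs
  imports "HOL-Analysis.Analysis"
begin

definition time_int :: "ereal \<Rightarrow> real set" where
  "time_int T = {t. 0 \<le> t \<and> ereal t < T}"

definition in_L1_weighted :: "real \<Rightarrow> (real \<Rightarrow> real) \<Rightarrow> bool" where
  "in_L1_weighted \<beta> f \<longleftrightarrow>
     set_integrable lborel {0<..} (\<lambda>z. (z powr (-2*\<beta>) + z) * f z)"

definition kernel_ok :: "(real \<Rightarrow> real \<Rightarrow> real) \<Rightarrow> real \<Rightarrow> real \<Rightarrow> bool" where
  "kernel_ok \<Psi> \<beta> k \<longleftrightarrow>
     (\<lambda>p. if 0 < fst p \<and> 0 < snd p then \<Psi> (fst p) (snd p) else 0) \<in> borel_measurable borel \<and>
     (\<forall>z>0. \<forall>y>0. 0 \<le> \<Psi> z y \<and> \<Psi> z y = \<Psi> y z) \<and>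
     (\<forall>z y. 0 < z \<and> z < 1 \<and> 0 < y \<and> y < 1 \<longrightarrow> \<Psi> z y \<le> k * (z * y) powr (-\<beta>)) \<and>
     (\<forall>z y. 0 < z \<and> z < 1 \<and> 1 < y \<longrightarrow> \<Psi> z y \<le> k * y * z powr (-\<beta>)) \<and>
     (\<forall>z y. 1 < z \<and> 1 < y \<longrightarrow> \<Psi> z y \<le> k * (z + y))"

definition weak_solution ::
  "(real \<Rightarrow> real \<Rightarrow> real) \<Rightarrow> real \<Rightarrow> ereal \<Rightarrow> (real \<Rightarrow> real) \<Rightarrow> (real \<Rightarrow> real \<Rightarrow> real) \<Rightarrow> bool" where
  "weak_solution \<Psi> \<beta> T gin g \<longleftrightarrow>
     \<comment> \<open>(jointly measurable representative)\<close>
     (\<lambda>p. if 0 < fst p \<and> snd p \<in> time_int T then g (fst p) (snd p) else 0) \<in> borel_measurable borel \<and>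
     \<comment> \<open>non-negativity\<close>
     (\<forall>t\<in>time_int T. AE z in lborel. z > 0 \<longrightarrow> 0 \<le> g z t) \<and>
     \<comment> \<open>g in C([0,T); L^1(0,infinity))\<close>
     (\<forall>t\<in>time_int T. set_integrable lborel {0<..} (\<lambda>z. g z t)) \<and>
     (\<forall>t0\<in>time_int T.
        ((\<lambda>t. LINT z:{0<..}|lborel. \<bar>g z t - g z t0\<bar>) \<longlongrightarrow> 0) (at t0 within time_int T)) \<and>
     \<comment> \<open>g in L^infinity(0,T; L^1_{-2beta,1}(0,infinity))\<close>
     (\<exists>C. AE t in lborel. (0 < t \<and> ereal t < T) \<longrightarrow>
          set_integrable lborel {0<..} (\<lambda>z. (z powr (-2*\<beta>) + z) * g z t) \<and>
          (LINT z:{0<..}|lborel. (z powr (-2*\<beta>) + z) * \<bar>g z t\<bar>) \<le> C) \<and>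
     \<comment> \<open>weak formulation\<close>
     (\<forall>t. 0 < t \<and> ereal t < T \<longrightarrow>
        (\<forall>\<omega>::real\<Rightarrow>real. \<omega> \<in> borel_measurable lborel \<and> bounded (\<omega> ` {0<..}) \<longrightarrow>
           (LINT z:{0<..}|lborel. (g z t - gin z) * \<omega> z) =
           1/2 * (LINT s:{0<..<t}|lborel.
                    (LINT z:{0<..}|lborel. (LINT y:{0<..}|lborel.
                        (\<omega> (z + y) - \<omega> z - \<omega> y) * \<Psi> z y * g z s * g y s)))))"

end

theory Submission
  imports Defs
begin

text \<open>Test the weak formulation with the truncations \<open>\<omega>\<^sub>n(z) = min z n\<close>. The increment
  \<open>\<omega>\<^sub>n(z+y) - \<omega>\<^sub>n(z) - \<omega>\<^sub>n(y)\<close> is bounded by \<open>min z y\<close> and vanishes once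
  \<open>z + y \<le> n\<close>, while the growth conditions on the kernel give
  \<open>min z y * \<Psi> z y \<le> 2k w(z) w(y)\<close> with \<open>w(z) = z powr (-2\<beta>) + z\<close> (off the null lines
  \<open>z = 1\<close>, \<open>y = 1\<close>, where no bound is assumed). Dominated convergence in \<open>y\<close>, in \<open>z\<close> and
  then in time, the last one using the uniform bound on the weighted norms of \<open>g\<close>, shows that
  the collision term tends to \<open>0\<close>. Hence \<open>\<integral> min z n g(z,t) dz\<close> tends to \<open>\<integral> z gin(z) dz\<close>,
  and monotone convergence identifies the limit with \<open>\<integral> z g(z,t) dz\<close>.\<close>

lemma truncation_increment_abs_le:
  fixes z y n :: real
  assumes "0 < z" "0 < y" "0 \<le> n"
  shows "\<bar>min (z + y) n - min z n - min y n\<bar> \<le> min z y"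
  using assms by (auto simp: min_def abs_if)

lemma truncation_increment_eq_0:
  fixes z y n :: real
  assumes "0 < z" "0 < y" "z + y \<le> n"
  shows "min (z + y) n - min z n - min y n = 0"
  using assms by (auto simp: min_def)

lemma set_integrable_mult_dominated:
  fixes w \<phi> f :: "'a \<Rightarrow> real"
  assumes int: "set_integrable M A (\<lambda>x. w x * f x)"
    and w: "w \<in> borel_measurable M" and \<phi>: "\<phi> \<in> borel_measurable M"
    and le: "\<And>x. x \<in> A \<Longrightarrow> \<bar>\<phi> x\<bar> \<le> w x"
  shows "set_integrable M A (\<lambda>x. \<phi> x * f x)"
proof (rule set_integrable_bound[OF int])
  \<comment> \<open>No measurability of \<open>f\<close> is needed: divide by \<open>w\<close>, harmless where \<open>w = 0\<close>
    since \<open>\<phi>\<close> vanishes there.\<close>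
  have "indicator A x *\<^sub>R (\<phi> x * f x) = \<phi> x / w x * (indicator A x *\<^sub>R (w x * f x))" for x
    using le[of x] by (cases "w x = 0") (auto simp: indicator_def)
  moreover have "(\<lambda>x. indicator A x *\<^sub>R (w x * f x)) \<in> borel_measurable M"
    using int unfolding set_integrable_def by (rule borel_measurable_integrable)
  ultimately show "set_borel_measurable M A (\<lambda>x. \<phi> x * f x)"
    unfolding set_borel_measurable_def
    by (simp only:) (intro borel_measurable_times borel_measurable_divide w \<phi>)
  show "AE x in M. x \<in> A \<longrightarrow> norm (\<phi> x * f x) \<le> norm (w x * f x)"
    using le by (intro AE_I2) (force simp: abs_mult intro: mult_right_mono)
qed

definition moment_weight :: "real \<Rightarrow> real \<Rightarrow> real" where
  "moment_weight \<beta> z = z powr (-2*\<beta>) + z"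

lemma moment_weight_measurable [measurable]: "moment_weight \<beta> \<in> borel_measurable borel"
  unfolding moment_weight_def[abs_def] by measurable

lemma moment_weight_ge: "0 < z \<Longrightarrow> z \<le> moment_weight \<beta> z"
  by (simp add: moment_weight_def)

lemma moment_weight_pos: "0 < z \<Longrightarrow> 0 < moment_weight \<beta> z"
  by (simp add: moment_weight_def add_nonneg_pos)

lemma powr_le_moment_weight:
  assumes "0 < z" "z < 1" "-2*\<beta> \<le> a"
  shows "z powr a \<le> moment_weight \<beta> z"
proof -
  have "z powr a \<le> z powr (-2*\<beta>)"
    using assms by (intro powr_mono') auto
  then show ?thesis
    using assms by (simp add: moment_weight_def)
qed

lemma kernel_okD:
  assumes "kernel_ok \<Psi> \<beta> k"
  shows kernel_ok_measurable:
      "(\<lambda>p. if 0 < fst p \<and> 0 < snd p then \<Psi> (fst p) (snd p) else 0) \<in> borel_measurable borel"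
    and kernel_ok_nonneg: "0 < z \<Longrightarrow> 0 < y \<Longrightarrow> 0 \<le> \<Psi> z y"
    and kernel_ok_sym: "0 < z \<Longrightarrow> 0 < y \<Longrightarrow> \<Psi> z y = \<Psi> y z"
    and kernel_ok_small_small:
      "0 < z \<Longrightarrow> z < 1 \<Longrightarrow> 0 < y \<Longrightarrow> y < 1 \<Longrightarrow> \<Psi> z y \<le> k * (z * y) powr (-\<beta>)"
    and kernel_ok_small_large: "0 < z \<Longrightarrow> z < 1 \<Longrightarrow> 1 < y \<Longrightarrow> \<Psi> z y \<le> k * y * z powr (-\<beta>)"
    and kernel_ok_large_large: "1 < z \<Longrightarrow> 1 < y \<Longrightarrow> \<Psi> z y \<le> k * (z + y)"
  using assms unfolding kernel_ok_def by blast+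

lemma kernel_min_le_moment_weight_ordered:
  assumes K: "kernel_ok \<Psi> \<beta> k" and "0 \<le> \<beta>" "0 < k"
    and "0 < z" "z \<le> y" "z \<noteq> 1" "y \<noteq> 1"
  shows "min z y * \<Psi> z y \<le> 2*k * moment_weight \<beta> z * moment_weight \<beta> y"
proof -
  have wz: "z \<le> moment_weight \<beta> z" and wy: "y \<le> moment_weight \<beta> y"
    using assms by (auto intro: moment_weight_ge)
  have nonneg: "0 \<le> \<Psi> z y"
    using kernel_ok_nonneg[OF K] assms by simp
  consider "y < 1" | "z < 1" "1 < y" | "1 < z"
    using assms by linarith
  then have "z * \<Psi> z y \<le> 2*k * moment_weight \<beta> z * moment_weight \<beta> y"
  proof cases
    case 1
    have "z * \<Psi> z y \<le> \<Psi> z y"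
      using nonneg 1 assms by (intro mult_left_le_one_le) auto
    also have "\<dots> \<le> k * (z * y) powr (-\<beta>)"
      using kernel_ok_small_small[OF K] 1 assms by simp
    also have "\<dots> = k * (z powr (-\<beta>) * y powr (-\<beta>))"
      using assms by (simp add: powr_mult)
    also have "\<dots> \<le> 2*k * (moment_weight \<beta> z * moment_weight \<beta> y)"
      using 1 assms wz by (intro mult_mono powr_le_moment_weight) auto
    finally show ?thesis
      by (simp add: mult.assoc)
  next
    case 2
    have "z * \<Psi> z y \<le> z * (k * y * z powr (-\<beta>))"
      using kernel_ok_small_large[OF K] 2 assms by (intro mult_left_mono) auto
    also have "\<dots> = k * y * z powr (1 - \<beta>)"
      using assms by (simp add: powr_diff powr_minus divide_inverse)
    also have "\<dots> \<le> 2*k * moment_weight \<beta> y * moment_weight \<beta> z"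
      using 2 assms wy wz by (intro mult_mono powr_le_moment_weight) auto
    finally show ?thesis
      by (simp add: mult_ac)
  next
    case 3
    have "z * \<Psi> z y \<le> z * (k * (z + y))"
      using kernel_ok_large_large[OF K] 3 assms by (intro mult_left_mono) auto
    also have "\<dots> \<le> 2*k * (z * y)"
      using assms by (simp add: algebra_simps mult_left_mono)
    also have "\<dots> \<le> 2*k * (moment_weight \<beta> z * moment_weight \<beta> y)"
      using assms wz wy by (intro mult_left_mono mult_mono) auto
    finally show ?thesis
      by (simp add: mult.assoc)
  qed
  then show ?thesis
    using \<open>z \<le> y\<close> by (simp add: min_absorb1)
qed

lemma kernel_min_le_moment_weight:
  assumes K: "kernel_ok \<Psi> \<beta> k" and "0 \<le> \<beta>" "0 < k"
    and "0 < z" "0 < y" "z \<noteq> 1" "y \<noteq> 1"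
  shows "min z y * \<Psi> z y \<le> 2*k * moment_weight \<beta> z * moment_weight \<beta> y"
proof (cases "z \<le> y")
  case False
  then have "min y z * \<Psi> y z \<le> 2*k * moment_weight \<beta> y * moment_weight \<beta> z"
    using kernel_min_le_moment_weight_ordered[OF K, of y z] assms by simp
  then show ?thesis
    using kernel_ok_sym[OF K, of z y] assms
    by (simp add: min.commute mult.commute mult.left_commute)
qed (use kernel_min_le_moment_weight_ordered assms in auto)

lemma integral_dominated_tendsto_0:
  fixes f :: "nat \<Rightarrow> 'a \<Rightarrow> real"
  assumes meas: "\<And>n. f n \<in> borel_measurable M" and w: "integrable M w"
    and bound: "\<And>n. AE x in M. \<bar>f n x\<bar> \<le> w x"
    and lim: "AE x in M. (\<lambda>n. f n x) \<longlonglongrightarrow> 0"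
  shows "(\<lambda>n. integral\<^sup>L M (f n)) \<longlonglongrightarrow> 0"
    and "\<bar>integral\<^sup>L M (f n)\<bar> \<le> integral\<^sup>L M w"
proof -
  show "(\<lambda>n. integral\<^sup>L M (f n)) \<longlonglongrightarrow> 0"
    using integral_dominated_convergence[OF borel_measurable_const meas w lim] bound by simp
  have "\<bar>integral\<^sup>L M (f n)\<bar> \<le> (\<integral>x. \<bar>f n x\<bar> \<partial>M)"
    by (rule integral_abs_bound)
  also have "\<dots> \<le> integral\<^sup>L M w"
    using bound[of n] by (intro integral_mono_AE' w) (auto elim: eventually_mono)
  finally show "\<bar>integral\<^sup>L M (f n)\<bar> \<le> integral\<^sup>L M w" .
qed

lemma (in sigma_finite_measure) iterated_integral_dominated_tendsto_0:
  fixes h :: "nat \<Rightarrow> 'a \<Rightarrow> 'a \<Rightarrow> real"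
  assumes meas: "\<And>n. (\<lambda>(x, y). h n x y) \<in> borel_measurable (M \<Otimes>\<^sub>M M)"
    and u: "integrable M u" "\<And>x. 0 \<le> u x"
    and bound: "\<And>n. AE x in M. AE y in M. \<bar>h n x y\<bar> \<le> C * u x * u y"
    and lim: "AE x in M. AE y in M. (\<lambda>n. h n x y) \<longlonglongrightarrow> 0"
  shows "(\<lambda>n. \<integral>x. \<integral>y. h n x y \<partial>M \<partial>M) \<longlonglongrightarrow> 0"
    and "\<bar>\<integral>x. \<integral>y. h n x y \<partial>M \<partial>M\<bar> \<le> C * (integral\<^sup>L M u)\<^sup>2"
proof -
  define I where "I n x = (\<integral>y. h n x y \<partial>M)" for n x
  have I_meas: "I n \<in> borel_measurable M" for n
    unfolding I_def using meas[of n] by measurable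
  have inner: "(\<lambda>n. I n x) \<longlonglongrightarrow> 0 \<and> (\<forall>n. \<bar>I n x\<bar> \<le> C * u x * integral\<^sup>L M u)"
    if x: "x \<in> space M" and bound_x: "\<forall>n. AE y in M. \<bar>h n x y\<bar> \<le> C * u x * u y"
      and lim_x: "AE y in M. (\<lambda>n. h n x y) \<longlonglongrightarrow> 0" for x
  proof -
    have "h n x \<in> borel_measurable M" for n
      using measurable_Pair2[OF meas[of n] x] by simp
    moreover have "AE y in M. \<bar>h n x y\<bar> \<le> C * u x * u y" for n
      using bound_x by blast
    ultimately show ?thesis
      using integral_dominated_tendsto_0[where w="\<lambda>y. C * u x * u y",
          OF _ integrable_mult_right[OF u(1)] _ lim_x]
      unfolding I_def by simp
  qed
  have "AE x in M. (\<lambda>n. I n x) \<longlonglongrightarrow> 0 \<and> (\<forall>n. \<bar>I n x\<bar> \<le> C * u x * integral\<^sup>L M u)"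
  proof -
    have "AE x in M. \<forall>n. AE y in M. \<bar>h n x y\<bar> \<le> C * u x * u y"
      unfolding AE_all_countable using bound by blast
    with lim AE_space show ?thesis
      by eventually_elim (rule inner)
  qed
  then have "AE x in M. (\<lambda>n. I n x) \<longlonglongrightarrow> 0"
    and "AE x in M. \<bar>I n x\<bar> \<le> C * u x * integral\<^sup>L M u" for n
    by (auto elim: eventually_mono)
  note dominated = integral_dominated_tendsto_0[OF I_meas
      integrable_mult_left[OF integrable_mult_right[OF u(1)]] this(2) this(1)]
  show "(\<lambda>n. \<integral>x. \<integral>y. h n x y \<partial>M \<partial>M) \<longlonglongrightarrow> 0"
    using dominated unfolding I_def by auto
  show "\<bar>\<integral>x. \<integral>y. h n x y \<partial>M \<partial>M\<bar> \<le> C * (integral\<^sup>L M u)\<^sup>2"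
    using dominated unfolding I_def by (auto simp: power2_eq_square mult.assoc)
qed

lemma collision_term_tendsto_0:
  fixes P :: "real \<Rightarrow> real \<Rightarrow> real" and f :: "real \<Rightarrow> real"
  assumes P_meas:
      "(\<lambda>p. if 0 < fst p \<and> 0 < snd p then P (fst p) (snd p) else 0) \<in> borel_measurable borel"
    and P_nonneg: "\<And>z y. 0 < z \<Longrightarrow> 0 < y \<Longrightarrow> 0 \<le> P z y"
    and P_bound: "\<And>z y. 0 < z \<Longrightarrow> 0 < y \<Longrightarrow> z \<noteq> 1 \<Longrightarrow> y \<noteq> 1 \<Longrightarrow>
      min z y * P z y \<le> K * moment_weight \<beta> z * moment_weight \<beta> y"
    and f: "set_integrable lborel {0<..} (\<lambda>z. moment_weight \<beta> z * f z)"
  shows "(\<lambda>n. LINT z:{0<..}|lborel. LINT y:{0<..}|lborel.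
      (min (z + y) (real n) - min z (real n) - min y (real n)) * P z y * f z * f y) \<longlonglongrightarrow> 0"
    and "\<bar>LINT z:{0<..}|lborel. LINT y:{0<..}|lborel.
      (min (z + y) (real n) - min z (real n) - min y (real n)) * P z y * f z * f y\<bar>
      \<le> K * (LINT z:{0<..}|lborel. moment_weight \<beta> z * \<bar>f z\<bar>)\<^sup>2"
proof -
  define \<Delta> where "\<Delta> n z y = min (z + y) (real n) - min z (real n) - min y (real n)"
    for n :: nat and z y
  define F where "F z = indicator {0<..} z * f z" for z
  define Pm where "Pm p = (if 0 < fst p \<and> 0 < snd p then P (fst p) (snd p) else 0)" for p
  define h where "h n z y = \<Delta> n z y * Pm (z, y) * F z * F y" for n z y
  define u where "u z = moment_weight \<beta> z * \<bar>F z\<bar>" for z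
  have wf_int: "integrable lborel (\<lambda>z. indicator {0<..} z * (moment_weight \<beta> z * f z))"
    using f unfolding set_integrable_def by simp
  have "F = (\<lambda>z. indicator {0<..} z * (moment_weight \<beta> z * f z) / moment_weight \<beta> z)"
    using moment_weight_pos[of _ \<beta>] by (force simp: fun_eq_iff F_def indicator_def)
  then have [measurable]: "F \<in> borel_measurable borel"
    using borel_measurable_integrable[OF wf_int]
    by (simp only: measurable_lborel2) (intro borel_measurable_divide moment_weight_measurable)
  have [measurable]: "Pm \<in> borel_measurable (lborel \<Otimes>\<^sub>M lborel)"
    using P_meas by (simp add: Pm_def[abs_def] lborel_prod)
  have h_meas: "(\<lambda>(z, y). h n z y) \<in> borel_measurable (lborel \<Otimes>\<^sub>M lborel)" for n
    unfolding h_def \<Delta>_def by measurable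
  have u_eq: "u z = \<bar>indicator {0<..} z * (moment_weight \<beta> z * f z)\<bar>" for z
    using moment_weight_pos[of z \<beta>] by (auto simp: u_def F_def indicator_def abs_mult)
  have u_int: "integrable lborel u"
    using wf_int unfolding u_eq[abs_def] by simp
  have u_integral: "integral\<^sup>L lborel u = (LINT z:{0<..}|lborel. moment_weight \<beta> z * \<bar>f z\<bar>)"
    unfolding set_lebesgue_integral_def u_def F_def using moment_weight_pos
    by (intro Bochner_Integration.integral_cong) (auto simp: indicator_def abs_mult)
  have h_bound: "\<bar>h n z y\<bar> \<le> K * u z * u y" if "z \<noteq> 1" "y \<noteq> 1" for n z y
  proof (cases "0 < z \<and> 0 < y")
    case True
    have "\<bar>h n z y\<bar> = \<bar>\<Delta> n z y\<bar> * P z y * (\<bar>f z\<bar> * \<bar>f y\<bar>)"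
      using True P_nonneg[of z y] by (simp add: h_def Pm_def F_def abs_mult)
    also have "\<dots> \<le> min z y * P z y * (\<bar>f z\<bar> * \<bar>f y\<bar>)"
      using True P_nonneg[of z y] truncation_increment_abs_le[of z y "real n"]
      by (intro mult_right_mono) (auto simp: \<Delta>_def)
    also have "\<dots> \<le> K * moment_weight \<beta> z * moment_weight \<beta> y * (\<bar>f z\<bar> * \<bar>f y\<bar>)"
      using True that by (intro mult_right_mono P_bound) auto
    also have "\<dots> = K * u z * u y"
      using True by (simp add: u_def F_def)
    finally show ?thesis .
  qed (auto simp: h_def F_def u_def)
  have u_nonneg: "0 \<le> u z" for z
    using moment_weight_pos[of z \<beta>] by (cases "0 < z") (auto simp: u_def F_def)
  have h_bound_AE: "AE z in lborel. AE y in lborel. \<bar>h n z y\<bar> \<le> K * u z * u y" for n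
    using AE_lborel_singleton[of 1] by eventually_elim
      (use AE_lborel_singleton[of 1] in \<open>auto elim!: eventually_mono intro: h_bound\<close>)
  have h_lim: "(\<lambda>n. h n z y) \<longlonglongrightarrow> 0" for z y
  proof (cases "0 < z \<and> 0 < y")
    case True
    have "\<forall>\<^sub>F n in sequentially. z + y \<le> real n"
      using filterlim_real_sequentially by (simp add: filterlim_at_top)
    then have "\<forall>\<^sub>F n in sequentially. h n z y = 0"
      by eventually_elim (use truncation_increment_eq_0 True in \<open>simp add: h_def \<Delta>_def\<close>)
    then show ?thesis
      by (rule tendsto_eventually)
  qed (auto simp: h_def F_def)
  note dominated = lborel.iterated_integral_dominated_tendsto_0[OF h_meas u_int u_nonneg
      h_bound_AE AE_I2[OF AE_I2[OF h_lim]]]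
  have "(LINT z:{0<..}|lborel. LINT y:{0<..}|lborel. \<Delta> n z y * P z y * f z * f y) =
      (\<integral>z. \<integral>y. h n z y \<partial>lborel \<partial>lborel)" for n
    unfolding set_lebesgue_integral_def h_def F_def Pm_def
    by (intro Bochner_Integration.integral_cong refl)
      (auto simp: indicator_def intro!: Bochner_Integration.integral_cong)
  with dominated show
    "(\<lambda>n. LINT z:{0<..}|lborel. LINT y:{0<..}|lborel.
      (min (z + y) (real n) - min z (real n) - min y (real n)) * P z y * f z * f y) \<longlonglongrightarrow> 0"
    "\<bar>LINT z:{0<..}|lborel. LINT y:{0<..}|lborel.
      (min (z + y) (real n) - min z (real n) - min y (real n)) * P z y * f z * f y\<bar>
      \<le> K * (LINT z:{0<..}|lborel. moment_weight \<beta> z * \<bar>f z\<bar>)\<^sup>2"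
    by (simp_all add: \<Delta>_def u_integral)
qed

lemma weak_solutionD:
  assumes "weak_solution \<Psi> \<beta> T gin g"
  shows weak_solution_measurable:
      "(\<lambda>p. if 0 < fst p \<and> snd p \<in> time_int T then g (fst p) (snd p) else 0)
        \<in> borel_measurable borel"
    and weak_solution_nonneg: "t \<in> time_int T \<Longrightarrow> AE z in lborel. 0 < z \<longrightarrow> 0 \<le> g z t"
    and weak_solution_integrable: "t \<in> time_int T \<Longrightarrow> set_integrable lborel {0<..} (\<lambda>z. g z t)"
    and weak_solution_bounded: "\<exists>C. AE t in lborel. 0 < t \<and> ereal t < T \<longrightarrow>
      set_integrable lborel {0<..} (\<lambda>z. moment_weight \<beta> z * g z t) \<and>
      (LINT z:{0<..}|lborel. moment_weight \<beta> z * \<bar>g z t\<bar>) \<le> C"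
    and weak_solution_weak_form: "0 < t \<Longrightarrow> ereal t < T \<Longrightarrow> \<omega> \<in> borel_measurable lborel \<Longrightarrow>
      bounded (\<omega> ` {0<..}) \<Longrightarrow>
      (LINT z:{0<..}|lborel. (g z t - gin z) * \<omega> z) =
      1/2 * (LINT s:{0<..<t}|lborel. LINT z:{0<..}|lborel. LINT y:{0<..}|lborel.
        (\<omega> (z + y) - \<omega> z - \<omega> y) * \<Psi> z y * g z s * g y s)"
  using assms unfolding weak_solution_def moment_weight_def by blast+

lemma weak_solution_collision_integral_tendsto_0:
  assumes K: "kernel_ok \<Psi> \<beta> k" and "0 \<le> \<beta>" "0 < k"
    and W: "weak_solution \<Psi> \<beta> T gin g"
    and t: "0 < t" "ereal t < T"
  shows "(\<lambda>n. LINT s:{0<..<t}|lborel. LINT z:{0<..}|lborel. LINT y:{0<..}|lborel.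
      (min (z + y) (real n) - min z (real n) - min y (real n)) * \<Psi> z y * g z s * g y s) \<longlonglongrightarrow> 0"
proof -
  define \<Delta> where "\<Delta> n z y = min (z + y) (real n) - min z (real n) - min y (real n)"
    for n :: nat and z y
  define Pm where "Pm p = (if 0 < fst p \<and> 0 < snd p then \<Psi> (fst p) (snd p) else 0)" for p
  define gm where "gm p = (if 0 < fst p \<and> snd p \<in> time_int T then g (fst p) (snd p) else 0)" for p
  have [measurable]: "Pm \<in> borel_measurable (borel \<Otimes>\<^sub>M borel)"
    using kernel_ok_measurable[OF K] unfolding Pm_def[abs_def] by (simp add: borel_prod)
  have [measurable]: "gm \<in> borel_measurable (borel \<Otimes>\<^sub>M borel)"
    using weak_solution_measurable[OF W] unfolding gm_def[abs_def] by (simp add: borel_prod)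
  obtain C where C: "AE s in lborel. 0 < s \<and> ereal s < T \<longrightarrow>
      set_integrable lborel {0<..} (\<lambda>z. moment_weight \<beta> z * g z s) \<and>
      (LINT z:{0<..}|lborel. moment_weight \<beta> z * \<bar>g z s\<bar>) \<le> C"
    using weak_solution_bounded[OF W] by blast
  define F where
    "F n s = (LINT z:{0<..}|lborel. LINT y:{0<..}|lborel. \<Delta> n z y * \<Psi> z y * g z s * g y s)" for n s
  define S where "S n s = indicator {0<..<t} s * F n s" for n s
  have S_eq: "S n s = indicator {0<..<t} s *
      (LINT z:{0<..}|lborel. LINT y:{0<..}|lborel. \<Delta> n z y * Pm (z, y) * gm (z, s) * gm (y, s))" for n s
  proof (cases "s \<in> {0<..<t}")
    case True
    then have "s \<in> time_int T"
      using t by (auto simp: time_int_def intro: order.strict_trans[of _ "ereal t"])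
    then show ?thesis
      using True unfolding S_def F_def by (auto simp: Pm_def gm_def intro!: set_lebesgue_integral_cong)
  qed (simp add: S_def)
  have S_meas: "S n \<in> borel_measurable lborel" for n
    unfolding S_eq[abs_def] set_lebesgue_integral_def \<Delta>_def by measurable
  have S_AE: "AE s in lborel.
      (\<lambda>n. S n s) \<longlonglongrightarrow> 0 \<and> (\<forall>n. \<bar>S n s\<bar> \<le> 2*k * C\<^sup>2 * indicator {0<..<t} s)"
    using C
  proof eventually_elim
    case (elim s)
    show ?case
    proof (cases "s \<in> {0<..<t}")
      case True
      then have "ereal s < T"
        using t by (auto intro: order.strict_trans[of _ "ereal t"])
      with True elim have f: "set_integrable lborel {0<..} (\<lambda>z. moment_weight \<beta> z * g z s)"
        and f_le: "(LINT z:{0<..}|lborel. moment_weight \<beta> z * \<bar>g z s\<bar>) \<le> C"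
        by auto
      have "0 \<le> (LINT z:{0<..}|lborel. moment_weight \<beta> z * \<bar>g z s\<bar>)"
        unfolding set_lebesgue_integral_def
        by (intro Bochner_Integration.integral_nonneg)
          (auto simp: indicator_def
            intro!: mult_nonneg_nonneg order.strict_implies_order[OF moment_weight_pos])
      with f_le have bound_le:
        "2*k * (LINT z:{0<..}|lborel. moment_weight \<beta> z * \<bar>g z s\<bar>)\<^sup>2 \<le> 2*k * C\<^sup>2"
        using \<open>0 < k\<close> by (intro mult_left_mono power_mono) auto
      note collision = collision_term_tendsto_0[where K="2*k", OF kernel_ok_measurable[OF K]
          kernel_ok_nonneg[OF K] kernel_min_le_moment_weight[OF K \<open>0 \<le> \<beta>\<close> \<open>0 < k\<close>] f]
      have "\<bar>F n s\<bar> \<le> 2*k * C\<^sup>2" for n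
        using order.trans[OF collision(2) bound_le] unfolding F_def \<Delta>_def .
      moreover have "(\<lambda>n. F n s) \<longlonglongrightarrow> 0"
        using collision(1) unfolding F_def \<Delta>_def .
      ultimately show ?thesis
        using True by (simp add: S_def)
    qed (simp add: S_def)
  qed
  have "(\<lambda>n. integral\<^sup>L lborel (S n)) \<longlonglongrightarrow> 0"
    using S_AE
    by (intro integral_dominated_tendsto_0[OF S_meas, where w="\<lambda>s. 2*k * C\<^sup>2 * indicator {0<..<t} s"])
      (use t in \<open>auto elim: eventually_mono simp: integrable_indicator_iff emeasure_lborel_Ioo\<close>)
  then show ?thesis
    unfolding S_def F_def \<Delta>_def set_lebesgue_integral_def by simp
qed

lemma tendsto_min_real_of_nat: "(\<lambda>n. min x (real n)) \<longlonglongrightarrow> x"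
proof -
  have "\<forall>\<^sub>F n in sequentially. x \<le> real n"
    using filterlim_real_sequentially by (simp add: filterlim_at_top)
  then have "\<forall>\<^sub>F n in sequentially. min x (real n) = x"
    by eventually_elim simp
  then show ?thesis
    by (rule tendsto_eventually)
qed

lemma tendsto_set_integral_mult_min:
  fixes f :: "real \<Rightarrow> real"
  assumes f: "set_integrable lborel {0<..} (\<lambda>z. z * f z)"
  shows "(\<lambda>n. LINT z:{0<..}|lborel. f z * min z (real n))
    \<longlonglongrightarrow> (LINT z:{0<..}|lborel. z * f z)"
proof -
  have "set_integrable lborel {0<..} (\<lambda>z. min z (real n) * f z)" for n
    using f by (rule set_integrable_mult_dominated) auto
  then have "(\<lambda>z. indicator {0<..} z * (f z * min z (real n))) \<in> borel_measurable lborel" for n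
    unfolding set_integrable_def by (auto simp: mult_ac dest: borel_measurable_integrable)
  moreover have "AE z in lborel.
      \<bar>indicator {0<..} z * (f z * min z (real n))\<bar> \<le> \<bar>indicator {0<..} z * (z * f z)\<bar>" for n
    by (intro AE_I2) (auto simp: indicator_def abs_mult,
        metis abs_ge_zero min.cobounded1 mult.commute mult_left_mono)
  moreover have "(\<lambda>n. indicator {0<..} z * (f z * min z (real n)))
      \<longlonglongrightarrow> indicator {0<..} z * (z * f z)" for z
    using tendsto_mult_left[OF tendsto_mult_left[OF tendsto_min_real_of_nat[of z], of "f z"],
        of "indicator {0<..} z"]
    by (simp only: mult.commute[of z "f z"])
  ultimately have "(\<lambda>n. \<integral>z. indicator {0<..} z * (f z * min z (real n)) \<partial>lborel)
      \<longlonglongrightarrow> (\<integral>z. indicator {0<..} z * (z * f z) \<partial>lborel)"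
    using f unfolding set_integrable_def
    by (intro integral_dominated_convergence[where w="\<lambda>z. \<bar>indicator {0<..} z * (z * f z)\<bar>"]) auto
  then show ?thesis
    unfolding set_lebesgue_integral_def by simp
qed

lemma set_integral_mult_eq_lim_min:
  fixes f :: "real \<Rightarrow> real"
  assumes nonneg: "AE z in lborel. 0 < z \<longrightarrow> 0 \<le> f z" and f: "set_integrable lborel {0<..} f"
    and lim: "(\<lambda>n. LINT z:{0<..}|lborel. f z * min z (real n)) \<longlonglongrightarrow> L"
  shows "(LINT z:{0<..}|lborel. z * f z) = L"
proof -
  have "set_integrable lborel {0<..} (\<lambda>z. min z (real n) * f z)" for n
    using set_integrable_mult_right[OF f, of "real n"] by (rule set_integrable_mult_dominated) auto
  then have "integrable lborel (\<lambda>z. indicator {0<..} z * (f z * min z (real n)))" for n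
    unfolding set_integrable_def by (simp add: mult_ac)
  moreover have "AE z in lborel. mono (\<lambda>n. indicator {0<..} z * (f z * min z (real n)))"
    using nonneg by eventually_elim
      (auto simp: indicator_def mono_def intro!: mult_left_mono min.mono)
  moreover have "(\<lambda>n. indicator {0<..} z * (f z * min z (real n)))
      \<longlonglongrightarrow> indicator {0<..} z * (z * f z)" for z
    using tendsto_mult_left[OF tendsto_mult_left[OF tendsto_min_real_of_nat[of z], of "f z"],
        of "indicator {0<..} z"]
    by (simp only: mult.commute[of z "f z"])
  moreover have "(\<lambda>z. indicator {0<..} z * (z * f z)) \<in> borel_measurable lborel"
    using borel_measurable_integrable[OF f[unfolded set_integrable_def]] by (simp add: mult.left_commute)
  ultimately have "(\<integral>z. indicator {0<..} z * (z * f z) \<partial>lborel) = L"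
    using lim unfolding set_lebesgue_integral_def by (intro integral_monotone_convergence) auto
  then show ?thesis
    unfolding set_lebesgue_integral_def by simp
qed

lemma weak_solution_truncated_first_moment:
  assumes W: "weak_solution \<Psi> \<beta> T gin g"
    and gin: "set_integrable lborel {0<..} (\<lambda>z. z * gin z)"
    and t: "0 < t" "ereal t < T"
  shows "(LINT z:{0<..}|lborel. g z t * min z (real n)) =
    (LINT z:{0<..}|lborel. gin z * min z (real n)) + 1/2 * (LINT s:{0<..<t}|lborel. LINT z:{0<..}|lborel. LINT y:{0<..}|lborel.
      (min (z + y) (real n) - min z (real n) - min y (real n)) * \<Psi> z y * g z s * g y s)"
proof -
  have "t \<in> time_int T"
    using t by (simp add: time_int_def)
  then have "set_integrable lborel {0<..} (\<lambda>z. real n * g z t)"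
    using weak_solution_integrable[OF W] by simp
  then have g_int: "set_integrable lborel {0<..} (\<lambda>z. g z t * min z (real n))"
    by (subst mult.commute, rule set_integrable_mult_dominated) auto
  have gin_int: "set_integrable lborel {0<..} (\<lambda>z. gin z * min z (real n))"
    using gin by (subst mult.commute, rule set_integrable_mult_dominated) auto
  have "bounded ((\<lambda>z. min z (real n)) ` {0<..})"
    by (auto simp: bounded_iff intro!: exI[of _ "real n"])
  then have "(LINT z:{0<..}|lborel. (g z t - gin z) * min z (real n)) =
    1/2 * (LINT s:{0<..<t}|lborel. LINT z:{0<..}|lborel. LINT y:{0<..}|lborel.
      (min (z + y) (real n) - min z (real n) - min y (real n)) * \<Psi> z y * g z s * g y s)"
    using weak_solution_weak_form[OF W t] by simp
  then show ?thesis
    using set_integral_diff(2)[OF g_int gin_int] by (simp add: left_diff_distrib eq_diff_eq')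
qed

theorem theorem3p1:
  fixes \<Psi> :: "real \<Rightarrow> real \<Rightarrow> real" and \<beta> k :: real and T :: ereal
    and gin :: "real \<Rightarrow> real" and g :: "real \<Rightarrow> real \<Rightarrow> real"
  assumes "\<beta> > 0" and "k > 0"
    and "kernel_ok \<Psi> \<beta> k"
    and "T > 0"
    and "in_L1_weighted \<beta> gin"
    and "AE z in lborel. z > 0 \<longrightarrow> 0 \<le> gin z"
    and "weak_solution \<Psi> \<beta> T gin g"
  shows "\<forall>t. 0 < t \<and> ereal t < T \<longrightarrow>
           (LINT z:{0<..}|lborel. z * g z t) = (LINT z:{0<..}|lborel. z * gin z)"
proof (intro allI impI)
  fix t assume "0 < t \<and> ereal t < T"
  then have t: "0 < t" "ereal t < T" and "t \<in> time_int T"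
    by (auto simp: time_int_def)
  have gin: "set_integrable lborel {0<..} (\<lambda>z. z * gin z)"
    using assms(5) unfolding in_L1_weighted_def moment_weight_def[symmetric]
    by (rule set_integrable_mult_dominated) (auto intro: moment_weight_ge)
  have "(\<lambda>n. LINT z:{0<..}|lborel. g z t * min z (real n))
    \<longlonglongrightarrow> (LINT z:{0<..}|lborel. z * gin z) + 1/2 * 0"
    unfolding weak_solution_truncated_first_moment[OF assms(7) gin t]
    using weak_solution_collision_integral_tendsto_0[OF assms(3) less_imp_le[OF assms(1)] assms(2,7) t]
    by (intro tendsto_add tendsto_mult tendsto_const tendsto_set_integral_mult_min[OF gin])
  then show "(LINT z:{0<..}|lborel. z * g z t) = (LINT z:{0<..}|lborel. z * gin z)"
    using weak_solution_nonneg[OF assms(7)] weak_solution_integrable[OF assms(7)] \<open>t \<in> time_int T\<close>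
    by (intro set_integral_mult_eq_lim_min) simp_all
qed

end
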